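(* Fix $p\geq 3$, let $\lambda=\lambda_p=2\cos(\pi/p)$ and $U=ST$ where $S=\begin{pmatrix}1&\lambda\\0&1\end{pmatrix}$, $T=\begin{pmatrix}0&-1\\1&0\end{pmatrix}$. Then $\frac{1}{U^k(0)}=U^{p-k+1}(0)$ for every integer $k$.
   Context: Matrices act on $\mathbb{R}\cup\{\infty\}$ by linear fractional transformations $z\mapsto\frac{az+b}{cz+d}$, with the conventions $1/0=\infty$ and $1/\infty=0$. *)

theory Defs
  imports Complex_Main
begin

text \<open>Points of the extended real line \<open>\<real> \<union> {\<infinity>}\<close>: \<open>Some x\<close> is the real x, \<open>None\<close> is \<infinity>.\<close>
type_synonym rext = "real option"

text \<open>2x2 real matrices (a, b, c, d) representing [[a, b], [c, d]].\<close>
type_synonym mat2 = "real \<times> real \<times> real \<times> real"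

fun mmul :: "mat2 \<Rightarrow> mat2 \<Rightarrow> mat2" where
  "mmul (a, b, c, d) (a', b', c', d') =
     (a * a' + b * c', a * b' + b * d', c * a' + d * c', c * b' + d * d')"

definition mid :: mat2 where "mid = (1, 0, 0, 1)"

fun minv :: "mat2 \<Rightarrow> mat2" where
  "minv (a, b, c, d) = (let D = a * d - b * c in (d / D, - b / D, - c / D, a / D))"

primrec mpow :: "mat2 \<Rightarrow> nat \<Rightarrow> mat2" where
  "mpow M 0 = mid"
| "mpow M (Suc n) = mmul M (mpow M n)"

definition mpowi :: "mat2 \<Rightarrow> int \<Rightarrow> mat2" where
  "mpowi M k = (if k \<ge> 0 then mpow M (nat k) else mpow (minv M) (nat (- k)))"

fun mact :: "mat2 \<Rightarrow> rext \<Rightarrow> rext" where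
  "mact (a, b, c, d) (Some x) =
     (if c * x + d = 0 then None else Some ((a * x + b) / (c * x + d)))"
| "mact (a, b, c, d) None = (if c = 0 then None else Some (a / c))"

fun rrecip :: "rext \<Rightarrow> rext" where
  "rrecip None = Some 0"
| "rrecip (Some x) = (if x = 0 then None else Some (1 / x))"

definition lam :: "nat \<Rightarrow> real" where "lam p = 2 * cos (pi / real p)"

definition Smat :: "nat \<Rightarrow> mat2" where "Smat p = (1, lam p, 0, 1)"
definition Tmat :: mat2 where "Tmat = (0, -1, 1, 0)"
definition Umat :: "nat \<Rightarrow> mat2" where "Umat p = mmul (Smat p) Tmat"

end

theory Submission
  imports Defs
begin

text \<open>Put \<open>s(k) = sin (k\<pi>/p) / sin (\<pi>/p)\<close>. The recurrence \<open>s(k+1) = \<lambda> s(k) - s(k-1)\<close>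
  gives \<open>U\<^sup>k = [[s(k+1), -s(k)], [s(k), -s(k-1)]]\<close> for every integer k, so \<open>U\<^sup>k(0) = s(k) / s(k-1)\<close>.
  Since \<open>sin (\<pi> - x) = sin x\<close>, the sequence is symmetric, \<open>s(p-j) = s(j)\<close>, hence
  \<open>U\<^sup>p\<^sup>-\<^sup>k\<^sup>+\<^sup>1(0) = s(k-1) / s(k)\<close>. Two consecutive terms never vanish together, which
  settles the cases where one side is \<open>\<infinity>\<close>.\<close>

definition sin_ratio :: "real \<Rightarrow> int \<Rightarrow> real" where
  "sin_ratio t k = sin (of_int k * t) / sin t"

lemma sin_ratio_0 [simp]: "sin_ratio t 0 = 0"
  by (simp add: sin_ratio_def)

lemma sin_ratio_1 [simp]: "sin t \<noteq> 0 \<Longrightarrow> sin_ratio t 1 = 1"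
  by (simp add: sin_ratio_def)

lemma sin_ratio_minus_1 [simp]: "sin t \<noteq> 0 \<Longrightarrow> sin_ratio t (- 1) = - 1"
  by (simp add: sin_ratio_def)

lemma sin_ratio_rec: "sin_ratio t (k + 1) = 2 * cos t * sin_ratio t k - sin_ratio t (k - 1)"
proof -
  have "sin (of_int (k + 1) * t) = 2 * cos t * sin (of_int k * t) - sin (of_int (k - 1) * t)"
    using sin_add [of "of_int k * t" t] sin_diff [of "of_int k * t" t]
    by (simp add: algebra_simps)
  then show ?thesis
    by (simp add: sin_ratio_def diff_divide_distrib)
qed

lemma sin_ratio_reflect:
  assumes "of_nat n * t = pi"
  shows "sin_ratio t (int n - j) = sin_ratio t j"
proof -
  have "of_int (int n - j) * t = pi - of_int j * t"
    using assms by (simp add: algebra_simps)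
  then show ?thesis
    by (simp add: sin_ratio_def)
qed

lemma sin_ratio_consecutive_nonzero:
  assumes "sin t \<noteq> 0"
  shows "sin_ratio t k \<noteq> 0 \<or> sin_ratio t (k - 1) \<noteq> 0"
proof (rule ccontr)
  assume "\<not> ?thesis"
  then have "sin (of_int k * t) = 0" "sin (of_int (k - 1) * t) = 0"
    using assms by (auto simp: sin_ratio_def)
  then have "sin (of_int k * t - of_int (k - 1) * t) = 0"
    by (simp add: sin_diff)
  then show False
    using assms by (simp add: algebra_simps)
qed

lemma mpow_chebyshev_mat:
  assumes "sin t \<noteq> 0"
  shows "mpow (2 * cos t, - 1, 1, 0) n =
    (sin_ratio t (int n + 1), - sin_ratio t (int n), sin_ratio t (int n), - sin_ratio t (int n - 1))"
proof (induction n)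
  case 0
  then show ?case
    using assms by (simp add: mid_def)
next
  case (Suc n)
  then show ?case
    using sin_ratio_rec [of t "int n + 1"] sin_ratio_rec [of t "int n"]
    by (simp add: algebra_simps)
qed

lemma mpow_minv_chebyshev_mat:
  assumes "sin t \<noteq> 0"
  shows "mpow (minv (2 * cos t, - 1, 1, 0)) n =
    (sin_ratio t (1 - int n), - sin_ratio t (- int n), sin_ratio t (- int n), - sin_ratio t (- int n - 1))"
proof (induction n)
  case 0
  then show ?case
    using assms by (simp add: mid_def)
next
  case (Suc n)
  have "sin_ratio t (- 1 - int n) = sin_ratio t (- int n - 1)"
    by (rule arg_cong [where f = "sin_ratio t"]) simp
  with Suc show ?case
    using sin_ratio_rec [of t "- int n - 1"] sin_ratio_rec [of t "- int n"]
    by (simp add: algebra_simps)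
qed

lemma mpowi_chebyshev_mat:
  assumes "sin t \<noteq> 0"
  shows "mpowi (2 * cos t, - 1, 1, 0) k =
    (sin_ratio t (k + 1), - sin_ratio t k, sin_ratio t k, - sin_ratio t (k - 1))"
  using mpow_chebyshev_mat [OF assms, of "nat k"] mpow_minv_chebyshev_mat [OF assms, of "nat (- k)"]
  by (cases "k \<ge> 0") (simp_all add: mpowi_def algebra_simps)

lemma Umat_eq: "Umat p = (2 * cos (pi / real p), - 1, 1, 0)"
  by (simp add: Umat_def Smat_def Tmat_def lam_def)

lemma mact_at_0:
  "mact (a, - u, u, - v) (Some 0) = (if v = 0 then None else Some (u / v))"
  by simp

theorem lemma4p2:
  fixes p :: nat and k :: int
  assumes "p \<ge> 3"
  shows "rrecip (mact (mpowi (Umat p) k) (Some 0))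
           = mact (mpowi (Umat p) (int p - k + 1)) (Some 0)"
proof -
  let ?t = "pi / real p"
  have "0 < ?t" "?t < pi"
    using assms by (simp_all add: divide_less_eq)
  then have sin_t: "sin ?t \<noteq> 0"
    using sin_gt_zero by fastforce
  have reflect: "sin_ratio ?t (int p - j) = sin_ratio ?t j" for j
    using assms by (intro sin_ratio_reflect) simp
  have "sin_ratio ?t (int p - k + 1) = sin_ratio ?t (k - 1)"
    using reflect [of "k - 1"] by (simp add: algebra_simps)
  moreover have "sin_ratio ?t (int p - k + 1 - 1) = sin_ratio ?t k"
    using reflect [of k] by simp
  ultimately show ?thesis
    using sin_ratio_consecutive_nonzero [OF sin_t, of k]
    by (auto simp: Umat_eq mpowi_chebyshev_mat [OF sin_t] mact_at_0 simp del: mact.simps)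
qed

end
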